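(* Let $n\ge1$ and let $U_1,\dots,U_n$ be i.i.d. uniform random variables on $[0,1]$. Then for every integer $0\le j\le n$, $$\mathbb P\Big(j-\tfrac12\le U_1+\dots+U_n\le j+\tfrac12\Big)=\frac{\overline{A(n,j)}}{2^nn!}.$$
   Context: $\overline{A(n,j)}$ is the number of signed permutations $\sigma\in B_n$ (bijections of $\{\pm1,\dots,\pm n\}$ with $\sigma(-i)=-\sigma(i)$) with exactly $j$ descents, where, using the order $1<2<\dots<n<-n<\dots<-1$, $\sigma$ has a descent at $i$ ($1\le i\le n-1$) if $\sigma(i)>\sigma(i+1)$ and a descent at $n$ if $\sigma(n)<0$. *)

theory Defs
  imports "HOL-Probability.Probability"
begin

definition signed_domain :: "nat \<Rightarrow> int set" where
  "signed_domain n = {-int n..int n} - {0}"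

definition signed_perms :: "nat \<Rightarrow> (int \<Rightarrow> int) set" where
  "signed_perms n = {\<sigma>. bij_betw \<sigma> (signed_domain n) (signed_domain n)
      \<and> (\<forall>i\<in>signed_domain n. \<sigma> (-i) = - \<sigma> i)
      \<and> (\<forall>x. x \<notin> signed_domain n \<longrightarrow> \<sigma> x = x)}"

text \<open>Rank in the order 1 < 2 < ... < n < -n < ... < -1.\<close>
definition signed_rank :: "nat \<Rightarrow> int \<Rightarrow> int" where
  "signed_rank n x = (if x > 0 then x else 2 * int n + 1 + x)"

definition signed_descents :: "nat \<Rightarrow> (int \<Rightarrow> int) \<Rightarrow> nat set" where
  "signed_descents n \<sigma> =
     {i \<in> {1..n}. (i < n \<and> signed_rank n (\<sigma> (int i)) > signed_rank n (\<sigma> (int i + 1)))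
                 \<or> (i = n \<and> \<sigma> (int n) < 0)}"

definition eulerB :: "nat \<Rightarrow> nat \<Rightarrow> nat" where
  "eulerB n j = card {\<sigma> \<in> signed_perms n. card (signed_descents n \<sigma>) = j}"

end

theory Submission
  imports Defs
begin

(* Proof plan.
   Write S_k = U_1 + ... + U_k.  The event of the theorem is {S_n <= j + 1/2} minus
   {S_n < j - 1/2}, so it suffices to know both distribution functions of S_n.

   1. Irwin-Hall: P(S_k < x) and P(S_k <= x) both equal
        F_k(x) = (1/k!) * sum_{i<=k} (-1)^i C(k,i) (x - i)_+^k,
      proved by induction on k: condition on the independent last summand (Fubini)
      and integrate the truncated powers over [0,1].
   2. Hence the probability is B_n(j + 1/2) / n!, where
        B_n(x) = sum_{i<=n+1} (-1)^i C(n+1,i) (x - i)_+^n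
      (n! times the Irwin-Hall density of n+1 summands), and B satisfies
        B_{m+1}(x) = x B_m(x) + (m + 2 - x) B_m(x - 1).
   3. A signed permutation is encoded by its word sigma(1) ... sigma(n).  Inserting the
      letter +-(m+1) into a signed word of length m at one of its m+1 gaps shows that the
      numbers A(m,j) of signed words with j descents satisfy
        A(m+1,j) = (2j+1) A(m,j) + (2m+3-2j) A(m,j-1).
   4. At x = j + 1/2 both recurrences coincide, so 2^n B_n(j + 1/2) = eulerB n j. *)

section \<open>Truncated powers and the Irwin-Hall distribution function\<close>

text \<open>Both versions are needed because the closed window \<open>[b - 1, b]\<close> is the
  difference of \<open>{S \<le> b}\<close> and \<open>{S < b - 1}\<close>.\<close>
definition below :: "bool \<Rightarrow> real \<Rightarrow> real \<Rightarrow> bool" where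
  "below strict x a \<longleftrightarrow> (if strict then a < x else a \<le> x)"

definition trunc_pow :: "bool \<Rightarrow> nat \<Rightarrow> real \<Rightarrow> real" where
  "trunc_pow strict k y = (if below strict y 0 then y ^ k else 0)"

definition irwin_hall :: "bool \<Rightarrow> nat \<Rightarrow> real \<Rightarrow> real" where
  "irwin_hall strict k x =
     (\<Sum>i\<le>k. (-1)^i * real (k choose i) * trunc_pow strict k (x - real i)) / fact k"

lemma trunc_pow_Suc: "trunc_pow strict (Suc k) y = (max y 0) ^ Suc k"
  by (auto simp: trunc_pow_def below_def max_def)

lemma continuous_on_trunc_pow: "continuous_on A (trunc_pow strict (Suc k))"
  unfolding trunc_pow_Suc[abs_def] by (intro continuous_intros)

lemma trunc_pow_has_derivative:
  assumes "y \<noteq> 0"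
  shows "(trunc_pow strict (Suc k) has_real_derivative
            real (Suc k) * trunc_pow strict k y) (at y)"
proof (cases "y > 0")
  case True
  have "((\<lambda>z. z ^ Suc k) has_real_derivative real (Suc k) * y ^ k) (at y)"
    by (rule derivative_eq_intros refl | simp)+
  then have "(trunc_pow strict (Suc k) has_real_derivative real (Suc k) * y ^ k) (at y)"
    by (rule has_field_derivative_transform_within_open[where S="{0<..}"])
       (use True in \<open>auto simp: trunc_pow_def below_def\<close>)
  then show ?thesis
    using True by (simp add: trunc_pow_def below_def)
next
  case False
  with assms have "y < 0" by simp
  have "(trunc_pow strict (Suc k) has_real_derivative 0) (at y)"
    by (rule has_field_derivative_transform_within_open[where S="{..<0}" and f="\<lambda>_. 0"])
       (use \<open>y < 0\<close> in \<open>auto simp: trunc_pow_def below_def\<close>)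
  then show ?thesis
    using \<open>y < 0\<close> by (simp add: trunc_pow_def below_def)
qed

lemma trunc_pow_reflect_has_derivative:
  assumes "c - t \<noteq> 0"
  shows "((\<lambda>t. trunc_pow strict (Suc k) (c - t)) has_real_derivative
            - (real (Suc k) * trunc_pow strict k (c - t))) (at t)"
proof -
  have "((\<lambda>t. c - t) has_real_derivative -1) (at t)"
    by (rule derivative_eq_intros refl | simp)+
  from DERIV_chain2[OF trunc_pow_has_derivative[OF assms] this] show ?thesis by simp
qed

text \<open>This is the
  telescoping step behind both the convolution formula and the density formula.\<close>
lemma alternating_binomial_diff:
  fixes g :: "nat \<Rightarrow> real"
  shows "(\<Sum>i\<le>k. (-1)^i * real (k choose i) * (g i - g (Suc i)))
       = (\<Sum>i\<le>Suc k. (-1)^i * real (Suc k choose i) * g i)"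
proof -
  have shift: "(\<Sum>i\<le>k. (-1)^i * real (k choose i) * g i)
      = g 0 - (\<Sum>i\<le>k. (-1)^i * real (k choose Suc i) * g (Suc i))"
  proof (cases k)
    case (Suc m)
    have "(\<Sum>i\<le>Suc m. (-1)^i * real (Suc m choose i) * g i)
        = g 0 + (\<Sum>i\<le>m. (-1)^Suc i * real (Suc m choose Suc i) * g (Suc i))"
      by (simp only: sum.atMost_Suc_shift) simp
    also have "(\<Sum>i\<le>m. (-1)^Suc i * real (Suc m choose Suc i) * g (Suc i))
        = - (\<Sum>i\<le>Suc m. (-1)^i * real (Suc m choose Suc i) * g (Suc i))"
      by (simp add: sum_negf binomial_eq_0 del: binomial_Suc_Suc)
    finally show ?thesis unfolding Suc by (simp del: sum.atMost_Suc)
  qed simp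
  have "(\<Sum>i\<le>Suc k. (-1)^i * real (Suc k choose i) * g i)
      = g 0 + (\<Sum>i\<le>k. (-1)^Suc i * real (Suc k choose Suc i) * g (Suc i))"
    by (simp only: sum.atMost_Suc_shift) simp
  also have "\<dots> = g 0 + (\<Sum>i\<le>k. - ((-1)^i * real (k choose i) * g (Suc i))
            - (-1)^i * real (k choose Suc i) * g (Suc i))"
    by (intro arg_cong2[where f="(+)"] refl sum.cong)
       (simp_all add: algebra_simps)
  also have "\<dots> = g 0 - (\<Sum>i\<le>k. (-1)^i * real (k choose i) * g (Suc i))
            - (\<Sum>i\<le>k. (-1)^i * real (k choose Suc i) * g (Suc i))"
    by (simp add: sum_subtractf sum_negf)
  finally have expand: "(\<Sum>i\<le>Suc k. (-1)^i * real (Suc k choose i) * g i) = \<dots>" .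
  show ?thesis
    unfolding expand by (simp add: sum_subtractf right_diff_distrib shift del: sum.atMost_Suc)
qed

text \<open>A primitive of the integrand is built from truncated powers of order \<open>k+1\<close>; it is
  differentiable except at the finitely many kinks \<open>t = x - i\<close>.\<close>
lemma irwin_hall_convolution:
  "((\<lambda>t. irwin_hall strict k (x - t)) has_integral irwin_hall strict (Suc k) x) {0..1}"
proof -
  define f where "f t = - (\<Sum>i\<le>k. (-1)^i * real (k choose i)
                       * trunc_pow strict (Suc k) (x - real i - t)) / fact (Suc k)" for t
  have deriv: "(f has_real_derivative irwin_hall strict k (x - t)) (at t)"
    if t: "t \<notin> (\<lambda>i. x - real i) ` {..k}" for t
  proof -
    define S where "S = (\<Sum>i\<le>k. (-1)^i * real (k choose i) * trunc_pow strict k (x - t - real i))"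
    have "(f has_real_derivative
         - (\<Sum>i\<le>k. (-1)^i * real (k choose i)
              * (- (real (Suc k) * trunc_pow strict k (x - real i - t)))) / fact (Suc k)) (at t)"
      unfolding f_def
      by (intro DERIV_cdivide DERIV_minus DERIV_sum DERIV_cmult trunc_pow_reflect_has_derivative)
         (use t in auto)
    moreover have "- (\<Sum>i\<le>k. (-1)^i * real (k choose i)
              * (- (real (Suc k) * trunc_pow strict k (x - real i - t)))) / fact (Suc k)
        = irwin_hall strict k (x - t)"
    proof -
      have "(\<Sum>i\<le>k. (-1)^i * real (k choose i)
              * (- (real (Suc k) * trunc_pow strict k (x - real i - t)))) = - real (Suc k) * S"
        unfolding S_def by (simp add: sum_distrib_left algebra_simps)
      moreover have "irwin_hall strict k (x - t) = S / fact k"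
        unfolding S_def irwin_hall_def by simp
      ultimately show ?thesis
        by (simp add: field_simps del: of_nat_Suc)
    qed
    ultimately show ?thesis by simp
  qed
  have "((\<lambda>t. irwin_hall strict k (x - t)) has_integral (f 1 - f 0)) {0..1}"
  proof (rule fundamental_theorem_of_calculus_strong[where S="(\<lambda>i. x - real i) ` {..k}"])
    fix t assume "t \<in> {0..1} - (\<lambda>i. x - real i) ` {..k}"
    then show "(f has_vector_derivative irwin_hall strict k (x - t)) (at t)"
      using deriv by (simp add: has_real_derivative_iff_has_vector_derivative)
  next
    show "continuous_on {0..1} f" unfolding f_def
      by (intro continuous_intros continuous_on_compose2[OF continuous_on_trunc_pow]) auto
  qed auto
  moreover have "f 1 - f 0 = irwin_hall strict (Suc k) x"
  proof -
    have "f 1 - f 0 = (\<Sum>i\<le>k. (-1)^i * real (k choose i) * (trunc_pow strict (Suc k) (x - real i)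
                       - trunc_pow strict (Suc k) (x - real (Suc i)))) / fact (Suc k)"
      by (simp add: f_def sum_subtractf diff_divide_distrib algebra_simps)
    also have "\<dots> = irwin_hall strict (Suc k) x"
      unfolding irwin_hall_def
      by (subst alternating_binomial_diff[where g="\<lambda>i. trunc_pow strict (Suc k) (x - real i)"]) simp
    finally show ?thesis .
  qed
  ultimately show ?thesis by simp
qed

section \<open>Distribution function of a sum of independent uniform variables\<close>

text \<open>Conditioning on an independent uniform summand: by Fubini on the joint law,
  \<open>P(X + Y \<in> A) = \<integral>\<^sub>0\<^sup>1 P(X + t \<in> A) dt\<close>.\<close>
lemma emeasure_add_uniform:
  fixes X Y :: "'a \<Rightarrow> real"
  assumes "prob_space M"
    and ind: "prob_space.indep_var M borel Y borel X"
    and distY: "distr M borel Y = uniform_measure lborel {0..1::real}"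
    and A[measurable]: "A \<in> sets borel"
  shows "emeasure M {\<omega>\<in>space M. X \<omega> + Y \<omega> \<in> A}
      = (\<integral>\<^sup>+t. indicator {0..1} t * emeasure M {\<omega>\<in>space M. X \<omega> + t \<in> A} \<partial>lborel)"
proof -
  interpret prob_space M by fact
  have [measurable]: "Y \<in> borel_measurable M" "X \<in> borel_measurable M"
    using ind by (auto simp: indep_var_distribution_eq)
  have joint: "distr M (borel \<Otimes>\<^sub>M borel) (\<lambda>x. (Y x, X x)) = distr M borel Y \<Otimes>\<^sub>M distr M borel X"
    using ind by (simp add: indep_var_distribution_eq)
  interpret DX: prob_space "distr M borel X" by (rule prob_space_distr) simp
  define B where "B = {p\<in>space (borel \<Otimes>\<^sub>M borel). snd p + fst p \<in> A}"
  have B[measurable]: "B \<in> sets (borel \<Otimes>\<^sub>M borel)" unfolding B_def by measurable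
  have "B \<in> sets (borel \<Otimes>\<^sub>M distr M borel X)"
    using B by (metis sets_distr sets_pair_measure_cong)
  then have section_measurable:
    "(\<lambda>t. emeasure (distr M borel X) (Pair t -` B)) \<in> borel_measurable borel"
    by (rule DX.measurable_emeasure_Pair)
  have section_eq: "emeasure (distr M borel X) (Pair t -` B) = emeasure M {\<omega>\<in>space M. X \<omega> + t \<in> A}"
    for t by (subst emeasure_distr) (auto simp: B_def space_pair_measure intro!: arg_cong[where f="emeasure M"])
  have "emeasure M {\<omega>\<in>space M. X \<omega> + Y \<omega> \<in> A} = emeasure (distr M (borel \<Otimes>\<^sub>M borel) (\<lambda>x. (Y x, X x))) B"
    by (subst emeasure_distr[OF _ B])
       (auto simp: B_def space_pair_measure intro!: arg_cong[where f="emeasure M"])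
  also have "\<dots> = (\<integral>\<^sup>+t. emeasure (distr M borel X) (Pair t -` B) \<partial>distr M borel Y)"
    unfolding joint by (rule DX.emeasure_pair_measure_alt) (simp add: B)
  also have "\<dots> = (\<integral>\<^sup>+t. emeasure (distr M borel X) (Pair t -` B) * indicator {0..1} t \<partial>lborel)
                    / emeasure lborel {0..1::real}"
    unfolding distY by (rule nn_integral_uniform_measure) (use section_measurable in simp_all)
  also have "\<dots> = (\<integral>\<^sup>+t. indicator {0..1} t * emeasure M {\<omega>\<in>space M. X \<omega> + t \<in> A} \<partial>lborel)"
    by (simp add: section_eq mult.commute divide_ennreal_def)
  finally show ?thesis .
qed

lemma indep_var_sum:
  fixes U :: "nat \<Rightarrow> 'a \<Rightarrow> real"
  assumes "prob_space M"
    and ind: "prob_space.indep_vars M (\<lambda>_. borel) U I"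
    and "i \<in> I" "J \<subseteq> I" "i \<notin> J"
  shows "prob_space.indep_var M borel (U i) borel (\<lambda>\<omega>. \<Sum>j\<in>J. U j \<omega>)"
proof -
  interpret prob_space M by fact
  have "indep_var (PiM {i} (\<lambda>_. borel)) (\<lambda>\<omega>. restrict (\<lambda>j. U j \<omega>) {i})
                  (PiM J (\<lambda>_. borel)) (\<lambda>\<omega>. restrict (\<lambda>j. U j \<omega>) J)"
    by (rule indep_var_restrict[OF ind]) (use assms in auto)
  from indep_var_compose[OF this, of "\<lambda>f. f i" borel "\<lambda>f. \<Sum>j\<in>J. f j" borel]
  have "indep_var borel ((\<lambda>f. f i) \<circ> (\<lambda>\<omega>. restrict (\<lambda>j. U j \<omega>) {i}))
                  borel ((\<lambda>f. \<Sum>j\<in>J. f j) \<circ> (\<lambda>\<omega>. restrict (\<lambda>j. U j \<omega>) J))"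
    by measurable
  moreover have "(\<lambda>f. f i) \<circ> (\<lambda>\<omega>. restrict (\<lambda>j. U j \<omega>) {i}) = U i"
    and "(\<lambda>f. \<Sum>j\<in>J. f j) \<circ> (\<lambda>\<omega>. restrict (\<lambda>j. U j \<omega>) J) = (\<lambda>\<omega>. \<Sum>j\<in>J. U j \<omega>)"
    by (auto simp: fun_eq_iff)
  ultimately show ?thesis by simp
qed

lemma irwin_hall_distribution:
  fixes U :: "nat \<Rightarrow> 'a \<Rightarrow> real"
  assumes P: "prob_space M"
    and ind: "prob_space.indep_vars M (\<lambda>_. borel) U {1..n}"
    and unif: "\<And>i. i \<in> {1..n} \<Longrightarrow> distr M borel (U i) = uniform_measure lborel {0..1::real}"
    and "k \<le> n"
  shows "measure M {\<omega>\<in>space M. below strict x (\<Sum>i=1..k. U i \<omega>)} = irwin_hall strict k x"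
  using \<open>k \<le> n\<close>
proof (induction k arbitrary: x)
  interpret prob_space M by fact
  case 0
  show ?case
    by (simp add: irwin_hall_def trunc_pow_def below_def prob_space)
next
  interpret prob_space M by fact
  case (Suc k)
  have [measurable]: "U i \<in> borel_measurable M" if "i \<in> {1..n}" for i
    using ind that by (auto simp: indep_vars_def)
  have [measurable]: "(\<lambda>\<omega>. \<Sum>i=1..k. U i \<omega>) \<in> borel_measurable M"
    using Suc.prems by (intro borel_measurable_sum) auto
  define A where "A = {a. below strict x a}"
  have [measurable]: "A \<in> sets borel"
    by (cases strict) (auto simp: A_def below_def)
  have shifted: "measure M {\<omega>\<in>space M. (\<Sum>i=1..k. U i \<omega>) + t \<in> A} = irwin_hall strict k (x - t)"
    for t
  proof -
    have "{\<omega>\<in>space M. (\<Sum>i=1..k. U i \<omega>) + t \<in> A}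
        = {\<omega>\<in>space M. below strict (x - t) (\<Sum>i=1..k. U i \<omega>)}"
      by (auto simp: A_def below_def)
    then show ?thesis using Suc by simp
  qed
  have nonneg: "0 \<le> irwin_hall strict k (x - t)" for t
    using shifted[of t] by (metis measure_nonneg)
  have "emeasure M {\<omega>\<in>space M. (\<Sum>i=1..k. U i \<omega>) + U (Suc k) \<omega> \<in> A}
      = (\<integral>\<^sup>+t. indicator {0..1} t * emeasure M {\<omega>\<in>space M. (\<Sum>i=1..k. U i \<omega>) + t \<in> A} \<partial>lborel)"
    by (rule emeasure_add_uniform[OF P indep_var_sum[OF P ind]])
       (use Suc.prems unif in auto)
  also have "\<dots> = (\<integral>\<^sup>+t. ennreal (indicator {0..1} t * irwin_hall strict k (x - t)) \<partial>lborel)"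
    by (rule nn_integral_cong)
       (auto simp: emeasure_eq_measure shifted[simplified] split: split_indicator)
  also have "\<dots> = ennreal (irwin_hall strict (Suc k) x)"
    by (rule nn_integral_has_integral_lebesgue[OF _ irwin_hall_convolution]) (use nonneg in auto)
  finally have "emeasure M {\<omega>\<in>space M. below strict x (\<Sum>i=1..Suc k. U i \<omega>)}
              = ennreal (irwin_hall strict (Suc k) x)"
    by (simp add: A_def add.commute)
  moreover have "0 \<le> irwin_hall strict (Suc k) x"
    by (rule has_integral_nonneg[OF irwin_hall_convolution]) (use nonneg in auto)
  ultimately show ?case by (simp add: emeasure_eq_measure)
qed

section \<open>Descents of signed words\<close>

text \<open>A signed permutation is handled through its word \<open>\<sigma>(1) \<dots> \<sigma>(n)\<close> over the nonzero
  integers.  \<open>signed_gt a b\<close> says that \<open>a\<close> comes after \<open>b\<close> in the order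
  \<open>1 < 2 < \<dots> < 0 < \<dots> < -2 < -1\<close>; the letter \<open>0\<close>, appended to every word as a sentinel,
  turns the descent at position \<open>n\<close> (\<open>\<sigma>(n) < 0\<close>) into an ordinary adjacent descent.\<close>
definition signed_gt :: "int \<Rightarrow> int \<Rightarrow> bool" where
  "signed_gt a b \<longleftrightarrow> (if a > 0 then b > 0 \<and> a > b else b \<ge> 0 \<or> a > b)"

fun adjacent_descents :: "int list \<Rightarrow> nat" where
  "adjacent_descents (a # b # xs) = (if signed_gt a b then 1 else 0) + adjacent_descents (b # xs)"
| "adjacent_descents _ = 0"

definition word_descents :: "int list \<Rightarrow> nat" where
  "word_descents w = adjacent_descents (w @ [0])"

lemma word_descents_Cons:
  "word_descents (x # xs) = (if signed_gt x (hd (xs @ [0])) then 1 else 0) + word_descents xs"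
  by (cases xs) (auto simp: word_descents_def)

lemma adjacent_descents_conv_sum:
  "adjacent_descents xs = (\<Sum>i<length xs - 1. if signed_gt (xs ! i) (xs ! Suc i) then 1 else 0)"
proof (induction xs rule: adjacent_descents.induct)
  case (1 a b xs)
  show ?case
    by (simp only: adjacent_descents.simps 1 length_Cons diff_Suc_1 sum.lessThan_Suc_shift) simp
qed auto

lemma signed_gt_top: "\<bar>v\<bar> = int N \<Longrightarrow> 0 < \<bar>a\<bar> \<Longrightarrow> \<bar>a\<bar> < int N \<Longrightarrow> signed_gt a v \<longleftrightarrow> a < 0"
  by (auto simp: signed_gt_def)

lemma top_signed_gt: "\<bar>v\<bar> = int N \<Longrightarrow> 0 < \<bar>a\<bar> \<Longrightarrow> \<bar>a\<bar> < int N \<Longrightarrow> signed_gt v a \<longleftrightarrow> a > 0"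
  by (auto simp: signed_gt_def)

lemma signed_gt_zero: "a \<noteq> 0 \<Longrightarrow> signed_gt a 0 \<longleftrightarrow> a < 0"
  by (auto simp: signed_gt_def)

definition insert_at :: "nat \<Rightarrow> 'a \<Rightarrow> 'a list \<Rightarrow> 'a list" where
  "insert_at p v w = take p w @ v # drop p w"

lemma insert_at_0 [simp]: "insert_at 0 v w = v # w"
  by (simp add: insert_at_def)

lemma insert_at_Suc_Cons [simp]: "insert_at (Suc p) v (x # w) = x # insert_at p v w"
  by (simp add: insert_at_def)

lemma length_insert_at [simp]: "p \<le> length w \<Longrightarrow> length (insert_at p v w) = Suc (length w)"
  by (simp add: insert_at_def)

lemma map_insert_at: "map f (insert_at p v w) = insert_at p (f v) (map f w)"
  by (simp add: insert_at_def take_map drop_map)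

lemma set_insert_at: "p \<le> length w \<Longrightarrow> set (insert_at p v w) = insert v (set w)"
  by (metis append_take_drop_id insert_at_def set_append set_simps(2) Un_insert_right
      sup_commute)

lemma distinct_insert_at: "distinct (insert_at p v w) \<longleftrightarrow> distinct w \<and> v \<notin> set w"
proof -
  have move_front: "distinct (xs @ v # ys) = distinct (v # xs @ ys)" for xs ys
    by auto
  show ?thesis
    unfolding insert_at_def move_front
    by (simp only: append_take_drop_id distinct.simps conj_commute)
qed

lemma nth_insert_at: "p \<le> length w \<Longrightarrow> insert_at p v w ! p = v"
  by (simp add: insert_at_def nth_append)

lemma take_drop_insert_at:
  "p \<le> length w \<Longrightarrow> take p (insert_at p v w) @ drop (Suc p) (insert_at p v w) = w"
  by (simp add: insert_at_def)

definition letters_below :: "nat \<Rightarrow> int list \<Rightarrow> bool" where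
  "letters_below N xs \<longleftrightarrow> (\<forall>a\<in>set xs. 0 < \<bar>a\<bar> \<and> \<bar>a\<bar> < int N)"

definition descent_gain :: "nat \<Rightarrow> int \<Rightarrow> int list \<Rightarrow> int" where
  "descent_gain p v xs = int (word_descents (insert_at p v xs)) - int (word_descents xs)"

lemma descent_gain_0:
  assumes "letters_below N xs" "\<bar>v\<bar> = int N" "N > 0"
  shows "descent_gain 0 v xs = (if xs = [] then (if v < 0 then 1 else 0) else (if hd xs > 0 then 1 else 0))"
  using assms
  by (cases xs) (auto simp: descent_gain_def word_descents_Cons letters_below_def top_signed_gt signed_gt_zero)

text \<open>Inserting behind the first letter \<open>x\<close> changes the gain only when the new letter
  lands directly after \<open>x\<close>, where it replaces the comparison of \<open>x\<close> with its successor.\<close>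
lemma descent_gain_Suc:
  assumes "letters_below N (x # ys)" "\<bar>v\<bar> = int N" "q \<le> length ys"
  shows "descent_gain (Suc q) v (x # ys) = descent_gain q v ys +
     (if q = 0 then (if x < 0 then 1 else 0) - (if signed_gt x (hd (ys @ [0])) then 1 else 0) else 0)"
proof (cases q)
  case 0
  then show ?thesis using assms
    by (auto simp: descent_gain_def word_descents_Cons letters_below_def signed_gt_top)
next
  case (Suc r)
  with assms obtain y zs where "ys = y # zs" by (cases ys) auto
  then show ?thesis using Suc by (simp add: descent_gain_def word_descents_Cons)
qed

lemma descent_gain_01:
  assumes "letters_below N xs" "\<bar>v\<bar> = int N" "N > 0" "p \<le> length xs"
  shows "descent_gain p v xs \<in> {0, 1}"
  using assms
proof (induction xs arbitrary: p)
  case Nil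
  then show ?case by (simp add: descent_gain_0)
next
  case (Cons x ys)
  have ys: "letters_below N ys" and x: "0 < \<bar>x\<bar>" "\<bar>x\<bar> < int N"
    using Cons.prems by (auto simp: letters_below_def)
  show ?case
  proof (cases p)
    case 0
    then show ?thesis using Cons.prems by (simp add: descent_gain_0)
  next
    case (Suc q)
    show ?thesis
    proof (cases "q = 0")
      case True
      then show ?thesis
        using Suc descent_gain_Suc[OF Cons.prems(1,2), of 0] descent_gain_0[OF ys Cons.prems(2,3)] x ys
        by (cases ys) (auto simp: signed_gt_def letters_below_def split: if_splits)
    next
      case False
      then show ?thesis
        using Suc descent_gain_Suc[OF Cons.prems(1,2), of q] Cons.IH[OF ys Cons.prems(2,3), of q] Cons.prems
        by simp
    qed
  qed
qed

lemma descent_gain_total: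
  assumes "letters_below N xs" "N > 0"
  shows "(\<Sum>p\<le>length xs. descent_gain p (int N) xs + descent_gain p (- int N) xs)
           = 2 * int (length xs) + 1 - 2 * int (word_descents xs)"
  using assms
proof (induction xs)
  case Nil
  then show ?case by (simp add: descent_gain_0 word_descents_def)
next
  case (Cons x ys)
  have ys: "letters_below N ys" and x: "0 < \<bar>x\<bar>" "\<bar>x\<bar> < int N"
    using Cons.prems by (auto simp: letters_below_def)
  let ?c = "(if x < 0 then 1 else 0) - (if signed_gt x (hd (ys @ [0])) then 1 else 0) :: int"
  have "(\<Sum>p\<le>length (x # ys). descent_gain p (int N) (x # ys) + descent_gain p (- int N) (x # ys))
      = (descent_gain 0 (int N) (x # ys) + descent_gain 0 (- int N) (x # ys))
        + (\<Sum>q\<le>length ys. descent_gain (Suc q) (int N) (x # ys) + descent_gain (Suc q) (- int N) (x # ys))"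
    by (simp only: length_Cons sum.atMost_Suc_shift)
  also have "(\<Sum>q\<le>length ys. descent_gain (Suc q) (int N) (x # ys) + descent_gain (Suc q) (- int N) (x # ys))
      = (\<Sum>q\<le>length ys. (descent_gain q (int N) ys + descent_gain q (- int N) ys) + (if q = 0 then 2 * ?c else 0))"
    by (rule sum.cong) (use descent_gain_Suc[OF Cons.prems(1)] in auto)
  also have "\<dots> = (\<Sum>q\<le>length ys. descent_gain q (int N) ys + descent_gain q (- int N) ys) + 2 * ?c"
    by (simp add: sum.distrib)
  also have "descent_gain 0 (int N) (x # ys) + descent_gain 0 (- int N) (x # ys) = 2 * (if x > 0 then 1 else 0)"
    using Cons.prems by (simp add: descent_gain_0)
  finally show ?case
    using Cons.IH[OF ys Cons.prems(2)] x by (auto simp: word_descents_Cons)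
qed

definition signed_words :: "nat \<Rightarrow> int list set" where
  "signed_words m = {w. length w = m \<and> distinct (map abs w) \<and> set (map abs w) = {1..int m}}"

text \<open>The \<open>2(m+1)\<close> ways to insert the new letter \<open>\<plusminus>(m+1)\<close>: a gap and a sign.\<close>
definition slots :: "nat \<Rightarrow> (nat \<times> int) set" where
  "slots m = {..m} \<times> {1, -1}"

definition insert_top :: "nat \<Rightarrow> int list \<times> nat \<times> int \<Rightarrow> int list" where
  "insert_top m x = insert_at (fst (snd x)) (snd (snd x) * int (Suc m)) (fst x)"

lemma abs_letter_signed_word:
  assumes "w \<in> signed_words m" "a \<in> set w"
  shows "1 \<le> \<bar>a\<bar> \<and> \<bar>a\<bar> \<le> int m"
proof -
  have "\<bar>a\<bar> \<in> set (map abs w)" using assms(2) by simp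
  then show ?thesis using assms(1) by (auto simp: signed_words_def)
qed

lemma signed_words_letters_below: "w \<in> signed_words m \<Longrightarrow> letters_below (Suc m) w"
  using abs_letter_signed_word by (fastforce simp: letters_below_def)

lemma finite_signed_words: "finite (signed_words m)"
proof (rule finite_subset)
  show "signed_words m \<subseteq> {w. set w \<subseteq> {-int m..int m} \<and> length w = m}"
    using abs_letter_signed_word by (fastforce simp: signed_words_def abs_le_iff)
  show "finite {w. set w \<subseteq> {-int m..int m} \<and> length w = m}"
    by (rule finite_lists_length_eq) simp
qed

lemma finite_slots: "finite (slots m)"
  by (simp add: slots_def)

lemma card_slots: "card (slots m) = 2 * Suc m"
  by (simp add: slots_def card_cartesian_product)

lemma insert_top_in: "x \<in> signed_words m \<times> slots m \<Longrightarrow> insert_top m x \<in> signed_words (Suc m)"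
proof -
  assume x: "x \<in> signed_words m \<times> slots m"
  obtain w p s where xe: "x = (w, p, s)" by (cases x) auto
  have w: "w \<in> signed_words m" and p: "p \<le> m" and s: "s = 1 \<or> s = -1"
    using x by (auto simp: xe slots_def)
  have lw: "length w = m" using w by (simp add: signed_words_def)
  have "\<bar>s * int (Suc m)\<bar> = int (Suc m)" using s by auto
  moreover have "int (Suc m) \<notin> set (map abs w)" using w by (auto simp: signed_words_def)
  ultimately show ?thesis using w p lw
    by (auto simp: insert_top_def xe signed_words_def map_insert_at distinct_insert_at set_insert_at)
qed

text \<open>The inserted letter is recovered as the unique letter of absolute value \<open>m+1\<close>, so the
  insertion data are determined by the result.\<close>
lemma insert_top_inj: "inj_on (insert_top m) (signed_words m \<times> slots m)"
proof (rule inj_onI)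
  fix x y assume x: "x \<in> signed_words m \<times> slots m" and y: "y \<in> signed_words m \<times> slots m"
    and eq: "insert_top m x = insert_top m y"
  obtain w p s where xe: "x = (w, p, s)" by (cases x) auto
  obtain w' p' s' where ye: "y = (w', p', s')" by (cases y) auto
  have p: "p \<le> m" and s: "s = 1 \<or> s = -1" and p': "p' \<le> m" and s': "s' = 1 \<or> s' = -1"
    using x y by (auto simp: xe ye slots_def)
  have lw: "length w = m" "length w' = m" using x y by (auto simp: xe ye signed_words_def)
  define u where "u = insert_top m x"
  have u1: "u = insert_at p (s * int (Suc m)) w" by (simp add: u_def insert_top_def xe)
  have u2: "u = insert_at p' (s' * int (Suc m)) w'" unfolding u_def eq by (simp add: insert_top_def ye)
  have du: "distinct (map abs u)" and lu: "length u = Suc m"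
    using insert_top_in[OF x] by (auto simp: u_def signed_words_def)
  have "\<bar>u ! p\<bar> = int (Suc m)" using s p lw by (auto simp: u1 nth_insert_at)
  moreover have "\<bar>u ! p'\<bar> = int (Suc m)" using s' p' lw by (auto simp: u2 nth_insert_at)
  ultimately have "map abs u ! p = map abs u ! p'" using p p' lu by simp
  then have pp: "p' = p"
    using du lu p p' nth_eq_iff_index_eq by (metis le_imp_less_Suc length_map)
  have ss: "s' = s"
    using nth_insert_at[of p w "s * int (Suc m)"] nth_insert_at[of p' w' "s' * int (Suc m)"] lw p pp u1 u2
    by simp
  have "w = take p u @ drop (Suc p) u"
    using take_drop_insert_at[of p w] lw p u1 by simp
  moreover have "w' = take p u @ drop (Suc p) u"
    using take_drop_insert_at[of p w'] lw p pp u2 by simp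
  ultimately show "x = y" using xe ye pp ss by simp
qed

text \<open>Conversely, deleting the letter of absolute value \<open>m+1\<close> from a signed word of length
  \<open>m+1\<close> leaves a signed word of length \<open>m\<close>.\<close>
lemma insert_top_surj: "signed_words (Suc m) \<subseteq> insert_top m ` (signed_words m \<times> slots m)"
proof
  fix u assume u: "u \<in> signed_words (Suc m)"
  have lu: "length u = Suc m" and du: "distinct (map abs u)"
    and su: "set (map abs u) = {1..int (Suc m)}"
    using u by (auto simp: signed_words_def)
  have "int (Suc m) \<in> set (map abs u)" using su by simp
  then obtain p where p: "p < Suc m" and up: "\<bar>u ! p\<bar> = int (Suc m)"
    using lu by (auto simp: in_set_conv_nth)
  define s where "s = sgn (u ! p)"
  define w where "w = take p u @ drop (Suc p) u"
  have s: "s = 1 \<or> s = -1" and us: "u ! p = s * int (Suc m)"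
    using up by (auto simp: s_def sgn_if abs_if split: if_splits)
  have lw: "length w = m" using lu p by (simp add: w_def)
  have uins: "u = insert_at p (u ! p) w"
    using p lu by (simp add: w_def insert_at_def id_take_nth_drop[symmetric])
  have abs_u: "map abs u = insert_at p (int (Suc m)) (map abs w)"
    using uins up by (metis map_insert_at)
  have dw: "distinct (map abs w)" and nin: "int (Suc m) \<notin> set (map abs w)"
    using du unfolding abs_u distinct_insert_at by auto
  have "insert (int (Suc m)) (set (map abs w)) = {1..int (Suc m)}"
    using su p lw unfolding abs_u by (simp add: set_insert_at)
  then have "set (map abs w) = {1..int (Suc m)} - {int (Suc m)}"
    using Diff_insert_absorb[OF nin] by simp
  also have "\<dots> = {1..int m}" by auto
  finally have "set (map abs w) = {1..int m}" .
  then have "w \<in> signed_words m" using lw dw by (simp add: signed_words_def)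
  moreover have "(p, s) \<in> slots m" using p s by (auto simp: slots_def)
  ultimately show "u \<in> insert_top m ` (signed_words m \<times> slots m)"
    using uins us by (intro image_eqI[where x="(w, p, s)"]) (auto simp: insert_top_def)
qed

lemma insert_top_bij: "bij_betw (insert_top m) (signed_words m \<times> slots m) (signed_words (Suc m))"
  unfolding bij_betw_def using insert_top_inj insert_top_in insert_top_surj by blast

definition top_gain :: "nat \<Rightarrow> int list \<Rightarrow> nat \<times> int \<Rightarrow> int" where
  "top_gain m w sl = descent_gain (fst sl) (snd sl * int (Suc m)) w"

lemma descents_insert_top:
  "int (word_descents (insert_top m (w, sl))) = int (word_descents w) + top_gain m w sl"
  by (simp add: insert_top_def top_gain_def descent_gain_def)

lemma top_gain_01: "w \<in> signed_words m \<Longrightarrow> sl \<in> slots m \<Longrightarrow> top_gain m w sl \<in> {0, 1}"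
  unfolding top_gain_def
  by (rule descent_gain_01[OF signed_words_letters_below])
     (auto simp: slots_def signed_words_def abs_mult)

lemma card_top_gain_1:
  assumes w: "w \<in> signed_words m"
  shows "int (card {sl \<in> slots m. top_gain m w sl = 1}) = 2 * int m + 1 - 2 * int (word_descents w)"
proof -
  have "int (card {sl \<in> slots m. top_gain m w sl = 1}) = (\<Sum>sl\<in>slots m. top_gain m w sl)"
  proof -
    have "(\<Sum>sl\<in>slots m. top_gain m w sl) = (\<Sum>sl\<in>slots m. if top_gain m w sl = 1 then 1 else 0)"
      by (rule sum.cong) (use top_gain_01[OF w] in auto)
    then show ?thesis
      by (simp add: sum.If_cases finite_slots Int_def)
  qed
  also have "\<dots> = (\<Sum>p\<le>m. \<Sum>s\<in>{1, -1::int}. descent_gain p (s * int (Suc m)) w)"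
    unfolding slots_def sum.cartesian_product top_gain_def by (simp add: split_beta)
  also have "\<dots> = (\<Sum>p\<le>m. descent_gain p (int (Suc m)) w + descent_gain p (- int (Suc m)) w)"
    by simp
  also have "\<dots> = 2 * int m + 1 - 2 * int (word_descents w)"
    using descent_gain_total[OF signed_words_letters_below[OF w]] w
    by (simp add: signed_words_def)
  finally show ?thesis .
qed

lemma card_top_gain_0:
  assumes w: "w \<in> signed_words m"
  shows "int (card {sl \<in> slots m. top_gain m w sl = 0}) = 2 * int (word_descents w) + 1"
proof -
  have "slots m = {sl \<in> slots m. top_gain m w sl = 0} \<union> {sl \<in> slots m. top_gain m w sl = 1}"
    using top_gain_01[OF w] by auto
  then have "card (slots m) = card ({sl \<in> slots m. top_gain m w sl = 0} \<union> {sl \<in> slots m. top_gain m w sl = 1})"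
    by simp
  also have "\<dots> = card {sl \<in> slots m. top_gain m w sl = 0} + card {sl \<in> slots m. top_gain m w sl = 1}"
    by (rule card_Un_disjoint) (auto simp: finite_slots)
  finally have "card (slots m) = card {sl \<in> slots m. top_gain m w sl = 0}
                                + card {sl \<in> slots m. top_gain m w sl = 1}" .
  then show ?thesis using card_top_gain_1[OF w] card_slots[of m] by simp
qed

lemma card_slots_with_descents:
  assumes w: "w \<in> signed_words m"
  shows "int (card {sl \<in> slots m. word_descents (insert_top m (w, sl)) = j})
      = (if word_descents w = j then 2 * int j + 1 else 0)
        + (if word_descents w + 1 = j then 2 * int m + 3 - 2 * int j else 0)"
proof -
  have iff: "word_descents (insert_top m (w, sl)) = j \<longleftrightarrow>
      (if word_descents w = j then top_gain m w sl = 0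
       else word_descents w + 1 = j \<and> top_gain m w sl = 1)" if sl: "sl \<in> slots m" for sl
    using top_gain_01[OF w sl] descents_insert_top[of m w sl] by auto
  consider "word_descents w = j" | "word_descents w + 1 = j" | "word_descents w \<noteq> j" "word_descents w + 1 \<noteq> j"
    by blast
  then show ?thesis
  proof cases
    case 1
    then have "{sl \<in> slots m. word_descents (insert_top m (w, sl)) = j} = {sl \<in> slots m. top_gain m w sl = 0}"
      using iff by auto
    then show ?thesis using 1 card_top_gain_0[OF w] by simp
  next
    case 2
    then have "{sl \<in> slots m. word_descents (insert_top m (w, sl)) = j} = {sl \<in> slots m. top_gain m w sl = 1}"
      using iff by auto
    then show ?thesis using 2 card_top_gain_1[OF w] by simp
  next
    case 3
    then have "{sl \<in> slots m. word_descents (insert_top m (w, sl)) = j} = {}"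
      using iff by auto
    with 3 show ?thesis by (simp only: card.empty) simp
  qed
qed

definition word_count :: "nat \<Rightarrow> nat \<Rightarrow> nat" where
  "word_count m j = card {w \<in> signed_words m. word_descents w = j}"

lemma word_count_0: "word_count 0 j = (if j = 0 then 1 else 0)"
proof -
  have "signed_words 0 = {[]}" by (auto simp: signed_words_def)
  moreover have "word_descents [] = 0" by (simp add: word_descents_def)
  ultimately have "{w \<in> signed_words 0. word_descents w = j} = (if j = 0 then {[]} else {})"
    by auto
  then show ?thesis by (simp add: word_count_def)
qed

lemma word_count_Suc_by_slots:
  "word_count (Suc m) j
     = (\<Sum>w\<in>signed_words m. card {sl \<in> slots m. word_descents (insert_top m (w, sl)) = j})"
proof -
  let ?f = "insert_top m"
  let ?X = "{x \<in> signed_words m \<times> slots m. word_descents (?f x) = j}"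
  have "?f ` (signed_words m \<times> slots m) = signed_words (Suc m)"
    using insert_top_bij[of m] by (simp add: bij_betw_def)
  then have "{u \<in> signed_words (Suc m). word_descents u = j}
      = {u \<in> ?f ` (signed_words m \<times> slots m). word_descents u = j}"
    by simp
  also have "\<dots> = ?f ` ?X"
    by auto
  finally have "{u \<in> signed_words (Suc m). word_descents u = j} = ?f ` ?X" .
  moreover have "inj_on ?f ?X"
    by (rule inj_on_subset[OF insert_top_inj]) auto
  ultimately have "word_count (Suc m) j = card ?X"
    by (simp add: word_count_def card_image)
  also have "?X = Sigma (signed_words m) (\<lambda>w. {sl \<in> slots m. word_descents (?f (w, sl)) = j})"
    by auto
  also have "card \<dots> = (\<Sum>w\<in>signed_words m. card {sl \<in> slots m. word_descents (?f (w, sl)) = j})"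
    by (rule card_SigmaI) (auto simp: finite_signed_words finite_slots)
  finally show ?thesis .
qed

lemma word_count_Suc:
  "real (word_count (Suc m) j) = (2 * real j + 1) * real (word_count m j)
     + (if j = 0 then 0 else (2 * real m + 3 - 2 * real j) * real (word_count m (j - 1)))"
proof -
  have "real (word_count (Suc m) j)
      = (\<Sum>w\<in>signed_words m. real (card {sl \<in> slots m. word_descents (insert_top m (w, sl)) = j}))"
    by (simp add: word_count_Suc_by_slots)
  also have "\<dots> = (\<Sum>w\<in>signed_words m. (if word_descents w = j then 2 * real j + 1 else 0)
          + (if word_descents w + 1 = j then 2 * real m + 3 - 2 * real j else 0))"
  proof (rule sum.cong[OF refl])
    fix w assume "w \<in> signed_words m"
    from arg_cong[OF card_slots_with_descents[OF this, of j], of real_of_int]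
    show "real (card {sl \<in> slots m. word_descents (insert_top m (w, sl)) = j})
        = (if word_descents w = j then 2 * real j + 1 else 0)
          + (if word_descents w + 1 = j then 2 * real m + 3 - 2 * real j else 0)"
      by (simp split: if_splits)
  qed
  also have "\<dots> = (2 * real j + 1) * real (word_count m j)
     + (if j = 0 then 0 else (2 * real m + 3 - 2 * real j) * real (word_count m (j - 1)))"
  proof -
    have "(\<Sum>w\<in>signed_words m. if word_descents w = j then 2 * real j + 1 else 0)
        = (2 * real j + 1) * real (word_count m j)"
      by (simp add: sum.inter_filter[symmetric] finite_signed_words word_count_def)
    moreover have "(\<Sum>w\<in>signed_words m. if word_descents w + 1 = j then 2 * real m + 3 - 2 * real j else 0)
        = (if j = 0 then 0 else (2 * real m + 3 - 2 * real j) * real (word_count m (j - 1)))"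
      by (cases j) (simp_all add: sum.inter_filter[symmetric] finite_signed_words word_count_def)
    ultimately show ?thesis by (simp add: sum.distrib)
  qed
  finally show ?thesis .
qed

section \<open>Signed permutations as signed words\<close>

lemma signed_domain_iff: "x \<in> signed_domain n \<longleftrightarrow> x \<noteq> 0 \<and> \<bar>x\<bar> \<le> int n"
  by (auto simp: signed_domain_def)

lemma signed_domain_abs_iff: "x \<in> signed_domain n \<longleftrightarrow> 1 \<le> \<bar>x\<bar> \<and> \<bar>x\<bar> \<le> int n"
  by (auto simp: signed_domain_def)

lemma signed_perm_maps: "\<sigma> \<in> signed_perms n \<Longrightarrow> x \<in> signed_domain n \<Longrightarrow> \<sigma> x \<in> signed_domain n"
  by (auto simp: signed_perms_def bij_betw_def)

lemma signed_perm_inj: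
  "\<sigma> \<in> signed_perms n \<Longrightarrow> x \<in> signed_domain n \<Longrightarrow> y \<in> signed_domain n \<Longrightarrow> \<sigma> x = \<sigma> y \<Longrightarrow> x = y"
  by (auto simp: signed_perms_def bij_betw_def inj_on_def)

lemma signed_perm_odd: "\<sigma> \<in> signed_perms n \<Longrightarrow> x \<in> signed_domain n \<Longrightarrow> \<sigma> (-x) = - \<sigma> x"
  by (auto simp: signed_perms_def)

lemma signed_perm_eqI:
  assumes s: "\<sigma> \<in> signed_perms n" and t: "\<tau> \<in> signed_perms n"
    and pos: "\<And>x. 0 < x \<Longrightarrow> x \<le> int n \<Longrightarrow> \<sigma> x = \<tau> x"
  shows "\<sigma> = \<tau>"
proof
  fix x
  consider "x \<notin> signed_domain n" | "0 < x" "x \<le> int n" | "0 < -x" "-x \<le> int n"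
    by (force simp: signed_domain_iff)
  then show "\<sigma> x = \<tau> x"
  proof cases
    case 1
    then show ?thesis using s t by (simp add: signed_perms_def)
  next
    case 3
    then have "- x \<in> signed_domain n" by (simp add: signed_domain_iff)
    then show ?thesis
      using signed_perm_odd[OF s] signed_perm_odd[OF t] pos[OF 3] by (metis minus_minus)
  qed (rule pos)
qed

definition perm_word :: "nat \<Rightarrow> (int \<Rightarrow> int) \<Rightarrow> int list" where
  "perm_word n \<sigma> = map (\<lambda>i. \<sigma> (int i)) [1..<Suc n]"

definition word_perm :: "nat \<Rightarrow> int list \<Rightarrow> int \<Rightarrow> int" where
  "word_perm n w x = (if x \<in> signed_domain n then sgn x * w ! nat (\<bar>x\<bar> - 1) else x)"

lemma length_perm_word [simp]: "length (perm_word n \<sigma>) = n"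
  by (simp add: perm_word_def)

lemma nth_perm_word: "i < n \<Longrightarrow> perm_word n \<sigma> ! i = \<sigma> (int (Suc i))"
  by (simp add: perm_word_def nth_map_upt del: upt_Suc)

lemma perm_word_in:
  assumes s: "\<sigma> \<in> signed_perms n"
  shows "perm_word n \<sigma> \<in> signed_words n"
proof -
  have dom: "int i \<in> signed_domain n" if "i \<in> {1..<Suc n}" for i
    using that by (auto simp: signed_domain_iff)
  have abs_eq: "map abs (perm_word n \<sigma>) = map (\<lambda>i. \<bar>\<sigma> (int i)\<bar>) [1..<Suc n]"
    by (simp add: perm_word_def)
  have "inj_on (\<lambda>i. \<bar>\<sigma> (int i)\<bar>) {1..<Suc n}"
  proof (rule inj_onI)
    fix a b assume a: "a \<in> {1..<Suc n}" and b: "b \<in> {1..<Suc n}"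
      and e: "\<bar>\<sigma> (int a)\<bar> = \<bar>\<sigma> (int b)\<bar>"
    have "- int b \<in> signed_domain n" using dom[OF b] by (simp add: signed_domain_iff)
    from e have "\<sigma> (int a) = \<sigma> (int b) \<or> \<sigma> (int a) = \<sigma> (- int b)"
      using signed_perm_odd[OF s dom[OF b]] by (auto simp: abs_eq_iff)
    then have "int a = int b \<or> int a = - int b"
      using signed_perm_inj[OF s dom[OF a]] dom[OF b] \<open>- int b \<in> signed_domain n\<close> by blast
    then show "a = b" using a b by auto
  qed
  then have dist: "distinct (map abs (perm_word n \<sigma>))"
    unfolding abs_eq distinct_map by (simp del: upt_Suc)
  have "set (map abs (perm_word n \<sigma>)) \<subseteq> {1..int n}"
    using signed_perm_maps[OF s dom] by (auto simp: abs_eq signed_domain_abs_iff)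
  moreover have "card (set (map abs (perm_word n \<sigma>))) = n"
    using dist distinct_card by fastforce
  ultimately have "set (map abs (perm_word n \<sigma>)) = {1..int n}"
    by (intro card_subset_eq) auto
  then show ?thesis using dist by (simp add: signed_words_def)
qed

lemma perm_word_inj: "inj_on (perm_word n) (signed_perms n)"
proof (rule inj_onI)
  fix \<sigma> \<tau> assume s: "\<sigma> \<in> signed_perms n" and t: "\<tau> \<in> signed_perms n"
    and e: "perm_word n \<sigma> = perm_word n \<tau>"
  show "\<sigma> = \<tau>"
  proof (rule signed_perm_eqI[OF s t])
    fix x :: int assume "0 < x" "x \<le> int n"
    then have "x = int (Suc (nat x - 1))" "nat x - 1 < n" by auto
    then show "\<sigma> x = \<tau> x"
      using arg_cong[OF e, of "\<lambda>l. l ! (nat x - 1)"] by (simp add: nth_perm_word)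
  qed
qed

lemma word_perm_in:
  assumes w: "w \<in> signed_words n"
  shows "word_perm n w \<in> signed_perms n"
proof -
  let ?\<sigma> = "word_perm n w"
  have lw: "length w = n" and dw: "distinct (map abs w)"
    using w by (auto simp: signed_words_def)
  have idx: "nat (\<bar>x\<bar> - 1) < n" if "x \<in> signed_domain n" for x
    using that by (auto simp: signed_domain_iff)
  have letter: "w ! k \<noteq> 0 \<and> \<bar>w ! k\<bar> \<le> int n" if "k < n" for k
  proof -
    have "1 \<le> \<bar>w ! k\<bar> \<and> \<bar>w ! k\<bar> \<le> int n"
      using abs_letter_signed_word[OF w, of "w ! k"] that lw by simp
    then show ?thesis by auto
  qed
  have abs_val: "\<bar>?\<sigma> x\<bar> = \<bar>w ! nat (\<bar>x\<bar> - 1)\<bar>" if "x \<in> signed_domain n" for x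
    using that by (auto simp: word_perm_def signed_domain_iff abs_mult)
  have maps: "?\<sigma> x \<in> signed_domain n" if "x \<in> signed_domain n" for x
    using abs_val[OF that] letter[OF idx[OF that]] by (auto simp: signed_domain_iff)
  have inj: "inj_on ?\<sigma> (signed_domain n)"
  proof (rule inj_onI)
    fix a b assume a: "a \<in> signed_domain n" and b: "b \<in> signed_domain n" and e: "?\<sigma> a = ?\<sigma> b"
    have "map abs w ! nat (\<bar>a\<bar> - 1) = map abs w ! nat (\<bar>b\<bar> - 1)"
      using abs_val[OF a] abs_val[OF b] e idx[OF a] idx[OF b] lw by simp
    then have "nat (\<bar>a\<bar> - 1) = nat (\<bar>b\<bar> - 1)"
      using dw idx[OF a] idx[OF b] lw nth_eq_iff_index_eq by (metis length_map)
    then have ab: "\<bar>a\<bar> = \<bar>b\<bar>" using a b unfolding signed_domain_abs_iff by linarith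
    then have "sgn a * w ! nat (\<bar>a\<bar> - 1) = sgn b * w ! nat (\<bar>a\<bar> - 1)"
      using a b e by (simp add: word_perm_def)
    then have "sgn a = sgn b" using letter[OF idx[OF a]] by simp
    then show "a = b" using ab by (metis sgn_mult_abs)
  qed
  have "?\<sigma> ` signed_domain n = signed_domain n"
    by (rule endo_inj_surj[OF _ _ inj]) (use maps in \<open>auto simp: signed_domain_def\<close>)
  then have "bij_betw ?\<sigma> (signed_domain n) (signed_domain n)"
    using inj by (simp add: bij_betw_def)
  moreover have "?\<sigma> (-i) = - ?\<sigma> i" if "i \<in> signed_domain n" for i
    using that by (auto simp: word_perm_def signed_domain_iff)
  moreover have "?\<sigma> x = x" if "x \<notin> signed_domain n" for x
    using that by (simp add: word_perm_def)
  ultimately show ?thesis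
    unfolding signed_perms_def by blast
qed

lemma perm_word_word_perm:
  assumes "w \<in> signed_words n"
  shows "perm_word n (word_perm n w) = w"
proof (rule nth_equalityI)
  show "length (perm_word n (word_perm n w)) = length w"
    using assms by (simp add: signed_words_def)
next
  fix i assume "i < length (perm_word n (word_perm n w))"
  then have "i < n" "int (Suc i) \<in> signed_domain n" by (simp_all add: signed_domain_iff)
  then show "perm_word n (word_perm n w) ! i = w ! i"
    by (simp add: nth_perm_word word_perm_def)
qed

lemma perm_word_bij: "bij_betw (perm_word n) (signed_perms n) (signed_words n)"
proof -
  have "signed_words n \<subseteq> perm_word n ` signed_perms n"
    using perm_word_word_perm word_perm_in by (metis image_eqI subsetI)
  then show ?thesis
    unfolding bij_betw_def using perm_word_inj perm_word_in by blast
qed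

lemma signed_rank_less_iff:
  "a \<in> signed_domain n \<Longrightarrow> b \<in> signed_domain n \<Longrightarrow> signed_rank n a > signed_rank n b \<longleftrightarrow> signed_gt a b"
  by (auto simp: signed_rank_def signed_gt_def signed_domain_iff)

lemma signed_descents_conv_word:
  assumes s: "\<sigma> \<in> signed_perms n"
  defines "ws \<equiv> perm_word n \<sigma> @ [0]"
  shows "signed_descents n \<sigma> = Suc ` {i \<in> {..<n}. signed_gt (ws ! i) (ws ! Suc i)}"
proof -
  have dom: "\<sigma> (int k) \<in> signed_domain n" if "1 \<le> k" "k \<le> n" for k
    using that by (intro signed_perm_maps[OF s]) (auto simp: signed_domain_iff)
  have letter: "ws ! i = \<sigma> (int (Suc i))" if "i < n" for i
    using that by (simp add: ws_def nth_append nth_perm_word)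
  have sentinel: "ws ! n = 0" by (simp add: ws_def nth_append)
  have descent: "Suc i \<in> signed_descents n \<sigma> \<longleftrightarrow> signed_gt (ws ! i) (ws ! Suc i)" if i: "i < n" for i
  proof (cases "Suc i < n")
    case True
    have "signed_gt (ws ! i) (ws ! Suc i) \<longleftrightarrow> signed_gt (\<sigma> (int (Suc i))) (\<sigma> (int (Suc i) + 1))"
      using True i by (simp add: letter add.commute)
    also have "\<dots> \<longleftrightarrow> signed_rank n (\<sigma> (int (Suc i))) > signed_rank n (\<sigma> (int (Suc i) + 1))"
      using dom[of "Suc i"] dom[of "Suc (Suc i)"] True
      by (intro signed_rank_less_iff[symmetric]) (auto simp: add.commute)
    finally show ?thesis using True by (auto simp: signed_descents_def)
  next
    case False
    then have n: "n = Suc i" using i by simp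
    have "signed_gt (ws ! i) (ws ! Suc i) \<longleftrightarrow> signed_gt (\<sigma> (int n)) 0"
      using n letter[OF i] sentinel by simp
    also have "\<dots> \<longleftrightarrow> \<sigma> (int n) < 0"
      using dom[of n] n by (intro signed_gt_zero) (auto simp: signed_domain_iff)
    finally show ?thesis using n by (auto simp: signed_descents_def)
  qed
  show ?thesis
  proof (rule set_eqI)
    fix k
    show "k \<in> signed_descents n \<sigma> \<longleftrightarrow> k \<in> Suc ` {i \<in> {..<n}. signed_gt (ws ! i) (ws ! Suc i)}"
    proof (cases "1 \<le> k \<and> k \<le> n")
      case True
      then obtain i where "k = Suc i" "i < n" by (cases k) auto
      then show ?thesis using descent by auto
    next
      case False
      then show ?thesis by (auto simp: signed_descents_def)
    qed
  qed
qed

lemma card_signed_descents: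
  assumes s: "\<sigma> \<in> signed_perms n"
  shows "card (signed_descents n \<sigma>) = word_descents (perm_word n \<sigma>)"
proof -
  define ws where "ws = perm_word n \<sigma> @ [0]"
  have "card (signed_descents n \<sigma>) = card {i \<in> {..<n}. signed_gt (ws ! i) (ws ! Suc i)}"
    unfolding signed_descents_conv_word[OF s] ws_def by (simp add: card_image)
  also have "\<dots> = (\<Sum>i<n. if signed_gt (ws ! i) (ws ! Suc i) then 1 else 0)"
    by (simp add: sum.inter_filter[symmetric])
  also have "\<dots> = word_descents (perm_word n \<sigma>)"
    by (simp add: word_descents_def adjacent_descents_conv_sum ws_def[symmetric]) (simp add: ws_def)
  finally show ?thesis .
qed

lemma eulerB_eq_word_count: "eulerB n j = word_count n j"
proof -
  let ?P = "{\<sigma> \<in> signed_perms n. word_descents (perm_word n \<sigma>) = j}"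
  have "{\<sigma> \<in> signed_perms n. card (signed_descents n \<sigma>) = j} = ?P"
    using card_signed_descents by auto
  then have "eulerB n j = card ?P"
    by (simp add: eulerB_def)
  also have "\<dots> = card (perm_word n ` ?P)"
    by (rule card_image[symmetric]) (rule inj_on_subset[OF perm_word_inj], auto)
  also have "perm_word n ` ?P = {w \<in> signed_words n. word_descents w = j}"
    using perm_word_bij[of n] by (auto simp: bij_betw_def)
  finally show ?thesis
    unfolding word_count_def .
qed

section \<open>The spline \<open>B\<^sub>n\<close> and its recurrence\<close>

text \<open>\<open>B\<^sub>n(x) = \<Sum>\<^sub>i\<^sub>\<le>\<^sub>n\<^sub>+\<^sub>1 (-1)\<^sup>i C(n+1,i) (x - i)\<^sub>+\<^sup>n\<close>, i.e. \<open>n!\<close> times the Irwin-Hall density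
  of \<open>n + 1\<close> summands.\<close>
definition bspline :: "nat \<Rightarrow> real \<Rightarrow> real" where
  "bspline n x = (\<Sum>i\<le>Suc n. (-1)^i * real (Suc n choose i) * trunc_pow True n (x - real i))"

lemma irwin_hall_window:
  assumes "n \<ge> 1"
  shows "irwin_hall False n b - irwin_hall True n (b - 1) = bspline n b / fact n"
proof -
  have same: "trunc_pow False n y = trunc_pow True n y" for y
    using assms by (cases n) (simp_all add: trunc_pow_Suc)
  have "irwin_hall False n b - irwin_hall True n (b - 1)
      = (\<Sum>i\<le>n. (-1)^i * real (n choose i)
           * (trunc_pow True n (b - real i) - trunc_pow True n (b - real (Suc i)))) / fact n"
    by (simp add: irwin_hall_def same diff_divide_distrib sum_subtractf algebra_simps)
  also have "\<dots> = bspline n b / fact n"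
    unfolding bspline_def by (subst alternating_binomial_diff[where g="\<lambda>i. trunc_pow True n (b - real i)"]) simp
  finally show ?thesis .
qed

lemma trunc_pow_Suc_mult: "trunc_pow True (Suc m) y = y * trunc_pow True m y"
  by (simp add: trunc_pow_def)

lemma binomial_weight_split:
  "- real (Suc (Suc m) choose Suc i) * (x - real (Suc i))
   = - x * real (Suc m choose Suc i) + (real m + 2 - x) * real (Suc m choose i)"
proof -
  have pascal: "real (Suc (Suc m) choose Suc i) = real (Suc m choose i) + real (Suc m choose Suc i)"
    by simp
  have absorb: "real (Suc i) * real (Suc (Suc m) choose Suc i) = real (Suc (Suc m)) * real (Suc m choose i)"
    using arg_cong[OF Suc_times_binomial[of i "Suc m"], of real] by (simp only: of_nat_mult)
  have "- real (Suc (Suc m) choose Suc i) * (x - real (Suc i))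
      = - x * real (Suc (Suc m) choose Suc i) + real (Suc i) * real (Suc (Suc m) choose Suc i)"
    by (simp add: algebra_simps)
  also have "\<dots> = - x * (real (Suc m choose i) + real (Suc m choose Suc i))
                  + real (Suc (Suc m)) * real (Suc m choose i)"
    by (subst absorb) (simp only: pascal)
  finally show ?thesis by (simp add: algebra_simps)
qed

text \<open>The recurrence \<open>B\<^sub>m\<^sub>+\<^sub>1(x) = x B\<^sub>m(x) + (m + 2 - x) B\<^sub>m(x - 1)\<close>, termwise from
  \<open>(y\<^sub>+)\<^sup>m\<^sup>+\<^sup>1 = y (y\<^sub>+)\<^sup>m\<close> and the coefficient identity.\<close>
lemma bspline_Suc: "bspline (Suc m) x = x * bspline m x + (real m + 2 - x) * bspline m (x - 1)"
proof -
  define h where "h i = trunc_pow True m (x - real i)" for i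
  define t where "t i = (-1)^Suc i * real (Suc (Suc m) choose Suc i) * (x - real (Suc i)) * h (Suc i)" for i
  define u where "u i = (-1)^Suc i * real (Suc m choose Suc i) * h (Suc i)" for i
  define v where "v i = (-1)^i * real (Suc m choose i) * h (Suc i)" for i
  have left: "bspline (Suc m) x = x * h 0 + (\<Sum>i\<le>Suc m. t i)"
  proof -
    have "bspline (Suc m) x = (\<Sum>i\<le>Suc (Suc m). (-1)^i * real (Suc (Suc m) choose i) * ((x - real i) * h i))"
      unfolding bspline_def h_def by (simp only: trunc_pow_Suc_mult)
    also have "\<dots> = x * h 0 + (\<Sum>i\<le>Suc m. t i)"
      by (simp only: sum.atMost_Suc_shift) (simp add: t_def mult.assoc)
    finally show ?thesis .
  qed
  have right1: "bspline m x = h 0 + (\<Sum>i\<le>Suc m. u i)"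
  proof -
    have "bspline m x = h 0 + (\<Sum>i\<le>m. u i)"
      unfolding bspline_def h_def by (simp only: sum.atMost_Suc_shift) (simp add: u_def h_def)
    also have "(\<Sum>i\<le>m. u i) = (\<Sum>i\<le>Suc m. u i)"
      by (simp add: u_def binomial_eq_0 del: binomial_Suc_Suc)
    finally show ?thesis .
  qed
  have right2: "bspline m (x - 1) = (\<Sum>i\<le>Suc m. v i)"
    unfolding bspline_def v_def h_def by (simp add: algebra_simps)
  have "t i = x * u i + (real m + 2 - x) * v i" for i
  proof -
    have "t i = (-1)^i * (- real (Suc (Suc m) choose Suc i) * (x - real (Suc i))) * h (Suc i)"
      unfolding t_def by (simp del: binomial_Suc_Suc add: algebra_simps)
    also have "\<dots> = x * u i + (real m + 2 - x) * v i"
      unfolding binomial_weight_split by (simp add: u_def v_def algebra_simps)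
    finally show ?thesis .
  qed
  then have "(\<Sum>i\<le>Suc m. t i) = x * (\<Sum>i\<le>Suc m. u i) + (real m + 2 - x) * (\<Sum>i\<le>Suc m. v i)"
    by (simp only: sum.distrib sum_distrib_left)
  then show ?thesis using left right1 right2 by (simp add: algebra_simps)
qed

lemma bspline_neg_half: "bspline m (-1/2) = 0"
  by (simp add: bspline_def trunc_pow_def below_def)

text \<open>At half-integers the spline recurrence becomes the recurrence of \<open>A(m, j)\<close>, so
  \<open>A(n, j) = 2\<^sup>n B\<^sub>n(j + 1/2)\<close>.\<close>
lemma word_count_bspline: "real (word_count n j) = 2 ^ n * bspline n (real j + 1/2)"
proof (induction n arbitrary: j)
  case 0
  show ?case by (cases j) (simp_all add: word_count_0 bspline_def trunc_pow_def below_def)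
next
  case (Suc m)
  have rec: "bspline (Suc m) (real j + 1/2)
      = (real j + 1/2) * bspline m (real j + 1/2) + (real m + 3/2 - real j) * bspline m (real j - 1/2)"
    using bspline_Suc[of m "real j + 1/2"] by (simp add: algebra_simps)
  show ?case
  proof (cases j)
    case 0
    then show ?thesis
      using word_count_Suc[of m 0] Suc.IH[of 0] rec bspline_neg_half[of m] by (simp add: algebra_simps)
  next
    case (Suc i)
    then have "real (word_count m (j - 1)) = 2 ^ m * bspline m (real j - 1/2)"
      using Suc.IH[of i] by (simp add: algebra_simps)
    then have "real (word_count (Suc m) j)
        = (2 * real j + 1) * (2 ^ m * bspline m (real j + 1/2))
          + (2 * real m + 3 - 2 * real j) * (2 ^ m * bspline m (real j - 1/2))"
      using word_count_Suc[of m j] Suc.IH[of j] Suc by simp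
    also have "\<dots> = 2 ^ Suc m * bspline (Suc m) (real j + 1/2)"
      unfolding rec by (simp add: algebra_simps)
    finally show ?thesis .
  qed
qed

theorem proposition4p7:
  fixes M :: "'a measure" and U :: "nat \<Rightarrow> 'a \<Rightarrow> real" and n j :: nat
  assumes "prob_space M"
    and "n \<ge> 1"
    and "prob_space.indep_vars M (\<lambda>_. borel) U {1..n}"
    and "\<And>i. i \<in> {1..n} \<Longrightarrow> distr M borel (U i) = uniform_measure lborel {0..1::real}"
    and "j \<le> n"
  shows "prob_space.prob M
           {\<omega> \<in> space M. real j - 1/2 \<le> (\<Sum>i=1..n. U i \<omega>) \<and> (\<Sum>i=1..n. U i \<omega>) \<le> real j + 1/2}
         = real (eulerB n j) / (2 ^ n * fact n)"
proof -
  interpret prob_space M by fact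
  have [measurable]: "U i \<in> borel_measurable M" if "i \<in> {1..n}" for i
    using assms(3) that by (auto simp: indep_vars_def)
  define b where "b = real j + 1/2"
  define S where "S \<omega> = (\<Sum>i=1..n. U i \<omega>)" for \<omega>
  have [measurable]: "S \<in> borel_measurable M"
    unfolding S_def by (intro borel_measurable_sum) auto
  let ?le = "{\<omega> \<in> space M. below False b (S \<omega>)}" and ?lt = "{\<omega> \<in> space M. below True (b - 1) (S \<omega>)}"
  have "{\<omega> \<in> space M. real j - 1/2 \<le> S \<omega> \<and> S \<omega> \<le> real j + 1/2} = ?le - ?lt"
    by (auto simp: below_def b_def)
  moreover have "prob (?le - ?lt) = prob ?le - prob ?lt"
    by (rule finite_measure_Diff) (auto simp: below_def)
  moreover have "prob ?le - prob ?lt = irwin_hall False n b - irwin_hall True n (b - 1)"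
    using irwin_hall_distribution[OF assms(1,3,4)] by (simp add: S_def)
  moreover have "\<dots> = real (eulerB n j) / (2 ^ n * fact n)"
    using irwin_hall_window[OF assms(2)] word_count_bspline[of n j]
    by (simp add: eulerB_eq_word_count b_def field_simps)
  ultimately show ?thesis
    unfolding S_def by simp
qed

end
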